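(* The metric space $(C^{lf}_\infty(\mathbb C),d_{\mathcal V})$ is path-connected.
   Context: $C^{lf}_\infty(\mathbb C)$ is the set of countably infinite locally finite subsets of $\mathbb C$ (i.e. meeting each compact set in finitely many points). $d_{\mathcal V}(A,B)=\sum_j 2^{-j}\frac{|\sum_{a\in A}\varphi_j(a)-\sum_{b\in B}\varphi_j(b)|}{1+|\sum_{a\in A}\varphi_j(a)-\sum_{b\in B}\varphi_j(b)|}$ for a fixed sequence $(\varphi_j)$ of compactly supported continuous real functions on $\mathbb C$ such that for each $m$ those supported in $\{|z|\le m\}$ are sup-norm dense among such functions supported in $\{|z|\le m\}$. *)

theory Defs
  imports "HOL-Analysis.Analysis"
begin

text \<open>Countably infinite locally finite subsets of the complex plane
  (infinite + meeting every compact set in finitely many points; such sets are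
  automatically countable, but we state countability explicitly).\<close>
definition Clf_inf :: "complex set set" where
  "Clf_inf = {A. infinite A \<and> countable A \<and> (\<forall>K. compact K \<longrightarrow> finite (A \<inter> K))}"

definition lf_sum :: "(complex \<Rightarrow> real) \<Rightarrow> complex set \<Rightarrow> real" where
  "lf_sum f A = (\<Sum>a\<in>{a\<in>A. f a \<noteq> 0}. f a)"

definition admissible_seq :: "(nat \<Rightarrow> complex \<Rightarrow> real) \<Rightarrow> bool" where
  "admissible_seq \<phi> \<longleftrightarrow>
     (\<forall>j. continuous_on UNIV (\<phi> j) \<and> compact (closure {z. \<phi> j z \<noteq> 0})) \<and>
     (\<forall>(m::nat) (f::complex \<Rightarrow> real) \<epsilon>. continuous_on UNIV f \<and> {z. f z \<noteq> 0} \<subseteq> cball 0 (real m)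
        \<and> \<epsilon> > 0 \<longrightarrow>
        (\<exists>j. {z. \<phi> j z \<noteq> 0} \<subseteq> cball 0 (real m) \<and> (\<forall>z. \<bar>f z - \<phi> j z\<bar> < \<epsilon>)))"

text \<open>The metric d_V (index j = 0,1,2,... corresponds to the paper's j = 1,2,3,...).\<close>
definition dV :: "(nat \<Rightarrow> complex \<Rightarrow> real) \<Rightarrow> complex set \<Rightarrow> complex set \<Rightarrow> real" where
  "dV \<phi> A B = (\<Sum>j. (1/2)^(Suc j) *
      (\<bar>lf_sum (\<phi> j) A - lf_sum (\<phi> j) B\<bar> / (1 + \<bar>lf_sum (\<phi> j) A - lf_sum (\<phi> j) B\<bar>)))"

end

theory Submission
  imports Defs
begin

text \<open>Since A \<union> B is countable, there are a point p \<notin> A \<union> B and a unit vector u different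
  from sgn (a - p) for every a \<in> A \<union> B. Let R be the points p + k u, k \<ge> 1. At time t take
  the dilation of A by 1/(1 - t) together with the dilation of R by 1/t, both centred at p.
  As p \<notin> A \<union> R, the first part leaves every compact set as t \<rightarrow> 1 and the second as t \<rightarrow> 0;
  by the choice of u the two parts never meet. So every test sum lf_sum (\<phi> j) is continuous
  along the path, and by Tannery's theorem the path is d_V-continuous. Thus A and B are
  both joined to R.\<close>

definition locally_finite :: "'a::topological_space set \<Rightarrow> bool" where
  "locally_finite A \<longleftrightarrow> (\<forall>K. compact K \<longrightarrow> finite (A \<inter> K))"

lemma Clf_inf_iff: "A \<in> Clf_inf \<longleftrightarrow> infinite A \<and> countable A \<and> locally_finite A"
  by (simp add: Clf_inf_def locally_finite_def)

lemma locally_finite_cball: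
  fixes A :: "'a::heine_borel set"
  shows "locally_finite A \<Longrightarrow> finite (A \<inter> cball c r)"
  by (simp add: locally_finite_def)

lemma locally_finite_cballI:
  fixes A :: "'a::heine_borel set"
  assumes "\<And>r. finite (A \<inter> cball c r)"
  shows "locally_finite A"
  unfolding locally_finite_def
proof (intro allI impI)
  fix K :: "'a set" assume "compact K"
  then obtain r where "\<forall>y\<in>K. dist c y \<le> r"
    using compact_imp_bounded bounded_any_center by blast
  then have "A \<inter> K \<subseteq> A \<inter> cball c r" by auto
  then show "finite (A \<inter> K)"
    using assms finite_subset by blast
qed

lemma locally_finite_empty [simp]: "locally_finite {}"
  by (simp add: locally_finite_def)

lemma locally_finite_Un:
  "locally_finite A \<Longrightarrow> locally_finite B \<Longrightarrow> locally_finite (A \<union> B)"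
  by (simp add: locally_finite_def Int_Un_distrib2)

lemma locally_finite_set_avoid:
  fixes A :: "'a::heine_borel set"
  assumes "locally_finite A"
  shows "\<exists>\<delta>>0. \<forall>x\<in>A. x \<noteq> a \<longrightarrow> \<delta> \<le> dist a x"
proof -
  obtain \<delta> where \<delta>: "\<delta> > 0" "\<forall>x\<in>A \<inter> cball a 1. x \<noteq> a \<longrightarrow> \<delta> \<le> dist a x"
    using finite_set_avoid[OF locally_finite_cball[OF assms]] by blast
  have "min \<delta> 1 \<le> dist a x" if "x \<in> A" "x \<noteq> a" for x
  proof (cases "dist a x \<le> 1")
    case True
    then have "\<delta> \<le> dist a x" using \<delta>(2) that by simp
    then show ?thesis by linarith
  qed simp
  moreover have "min \<delta> 1 > 0" using \<delta>(1) by simp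
  ultimately show ?thesis by blast
qed

lemma finite_support_Int:
  assumes "locally_finite A" "compact (closure {z. f z \<noteq> 0})"
  shows "finite {a\<in>A. f a \<noteq> 0}"
proof (rule finite_subset)
  show "{a\<in>A. f a \<noteq> 0} \<subseteq> A \<inter> closure {z. f z \<noteq> 0}"
    using closure_subset[of "{z. f z \<noteq> 0}"] by blast
  show "finite (A \<inter> closure {z. f z \<noteq> 0})"
    using assms by (simp add: locally_finite_def)
qed

lemma lf_sum_eq_sum:
  assumes "finite T" "{a\<in>A. f a \<noteq> 0} \<subseteq> T" "T \<subseteq> A"
  shows "lf_sum f A = (\<Sum>a\<in>T. f a)"
  unfolding lf_sum_def by (rule sum.mono_neutral_left) (use assms in auto)

lemma lf_sum_Un_disjoint:
  assumes "locally_finite A" "locally_finite B" "compact (closure {z. f z \<noteq> 0})" "A \<inter> B = {}"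
  shows "lf_sum f (A \<union> B) = lf_sum f A + lf_sum f B"
proof -
  have "{a\<in>A \<union> B. f a \<noteq> 0} = {a\<in>A. f a \<noteq> 0} \<union> {a\<in>B. f a \<noteq> 0}" by auto
  moreover have "finite {a\<in>A. f a \<noteq> 0}" "finite {a\<in>B. f a \<noteq> 0}"
    using assms(1-3) by (simp_all add: finite_support_Int)
  ultimately show ?thesis
    unfolding lf_sum_def using assms(4) by (simp add: sum.union_disjoint disjoint_iff)
qed

lemma lf_sum_approx:
  fixes \<epsilon> :: real
  assumes "locally_finite A" "compact K" "{z. f z \<noteq> 0} \<subseteq> K" "{z. g z \<noteq> 0} \<subseteq> K"
    and close: "\<And>z. \<bar>f z - g z\<bar> \<le> \<epsilon>"
  shows "\<bar>lf_sum f A - lf_sum g A\<bar> \<le> card (A \<inter> K) * \<epsilon>"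
proof -
  have fin: "finite (A \<inter> K)"
    using assms(1,2) by (simp add: locally_finite_def)
  have "lf_sum f A = (\<Sum>a\<in>A \<inter> K. f a)" "lf_sum g A = (\<Sum>a\<in>A \<inter> K. g a)"
    using assms(3,4) by (auto intro!: lf_sum_eq_sum fin)
  then have "lf_sum f A - lf_sum g A = (\<Sum>a\<in>A \<inter> K. f a - g a)"
    by (simp add: sum_subtractf)
  also have "\<bar>\<dots>\<bar> \<le> (\<Sum>a\<in>A \<inter> K. \<epsilon>)"
    using close by (intro order.trans[OF sum_abs] sum_mono)
  finally show ?thesis by simp
qed

lemma abs_div_one_plus_abs_triangle:
  fixes a b c :: real
  shows "\<bar>a - c\<bar> / (1 + \<bar>a - c\<bar>) \<le> \<bar>a - b\<bar> / (1 + \<bar>a - b\<bar>) + \<bar>b - c\<bar> / (1 + \<bar>b - c\<bar>)"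
proof -
  define u v w where "u = \<bar>a - b\<bar>" and "v = \<bar>b - c\<bar>" and "w = \<bar>a - c\<bar>"
  have uvw: "0 \<le> u" "0 \<le> v" "0 \<le> w" "w \<le> u + v"
    by (auto simp: u_def v_def w_def)
  have "w / (1 + w) \<le> (u + v) / (1 + (u + v))"
    using uvw by (simp add: divide_simps) (simp add: algebra_simps)
  also have "\<dots> = u / (1 + (u + v)) + v / (1 + (u + v))"
    by (simp add: add_divide_distrib)
  also have "\<dots> \<le> u / (1 + u) + v / (1 + v)"
    using uvw by (intro add_mono divide_left_mono) auto
  finally show ?thesis by (simp add: u_def v_def w_def)
qed

lemma dV_term_bound: "\<bar>(1/2::real)^Suc j * (\<bar>x\<bar> / (1 + \<bar>x\<bar>))\<bar> \<le> (1/2)^Suc j"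
proof -
  have "(1/2::real)^Suc j * (\<bar>x\<bar> / (1 + \<bar>x\<bar>)) \<le> (1/2)^Suc j * 1"
    by (intro mult_left_mono) simp_all
  then show ?thesis by (simp del: power_Suc)
qed

lemma summable_half_power_Suc: "summable (\<lambda>j. (1/2::real)^Suc j)"
  using summable_geometric[of "1/2::real"] by (simp add: summable_mult)

lemma dV_summable:
  "summable (\<lambda>j. (1/2::real)^Suc j * (\<bar>lf_sum (\<phi> j) A - lf_sum (\<phi> j) B\<bar> /
      (1 + \<bar>lf_sum (\<phi> j) A - lf_sum (\<phi> j) B\<bar>)))"
  by (rule summable_comparison_test'[OF summable_half_power_Suc]) (simp only: real_norm_def dV_term_bound)

lemma dV_nonneg: "0 \<le> dV \<phi> A B"
  unfolding dV_def by (rule suminf_nonneg[OF dV_summable]) simp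

lemma dV_commute: "dV \<phi> A B = dV \<phi> B A"
  unfolding dV_def by (simp add: abs_minus_commute)

lemma dV_triangle: "dV \<phi> A C \<le> dV \<phi> A B + dV \<phi> B C"
  unfolding dV_def
proof (subst suminf_add[OF dV_summable dV_summable], rule suminf_le)
  fix j
  show "(1/2::real)^Suc j * (\<bar>lf_sum (\<phi> j) A - lf_sum (\<phi> j) C\<bar> / (1 + \<bar>lf_sum (\<phi> j) A - lf_sum (\<phi> j) C\<bar>))
     \<le> (1/2)^Suc j * (\<bar>lf_sum (\<phi> j) A - lf_sum (\<phi> j) B\<bar> / (1 + \<bar>lf_sum (\<phi> j) A - lf_sum (\<phi> j) B\<bar>))
      + (1/2)^Suc j * (\<bar>lf_sum (\<phi> j) B - lf_sum (\<phi> j) C\<bar> / (1 + \<bar>lf_sum (\<phi> j) B - lf_sum (\<phi> j) C\<bar>))"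
    unfolding distrib_left[symmetric]
    by (rule mult_left_mono[OF abs_div_one_plus_abs_triangle]) simp
qed (intro dV_summable summable_add)+

lemma dV_eq_0_iff: "dV \<phi> A B = 0 \<longleftrightarrow> (\<forall>j. lf_sum (\<phi> j) A = lf_sum (\<phi> j) B)"
  unfolding dV_def
  by (subst suminf_eq_zero_iff[OF dV_summable]) (auto simp: add_nonneg_eq_0_iff)

lemma exists_bump_isolating:
  fixes E :: "'a::{real_normed_vector, heine_borel} set"
  assumes "locally_finite E"
  obtains f :: "'a \<Rightarrow> real" where "continuous_on UNIV f" "{z. f z \<noteq> 0} \<subseteq> cball a 1"
    "f a = 1" "\<And>x. x \<in> E \<Longrightarrow> x \<noteq> a \<Longrightarrow> f x = 0"
proof -
  obtain \<delta> where \<delta>: "\<delta> > 0" "\<And>x. x \<in> E \<Longrightarrow> x \<noteq> a \<Longrightarrow> \<delta> \<le> dist a x"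
    using locally_finite_set_avoid[OF assms] by blast
  define r where "r = min \<delta> 1"
  have r: "0 < r" "r \<le> 1" using \<delta>(1) by (auto simp: r_def)
  define f where "f z = max 0 (1 - dist a z / r)" for z
  show thesis
  proof
    show "continuous_on UNIV f" unfolding f_def by (intro continuous_intros) (use r in auto)
    have "f z = 0" if "r \<le> dist a z" for z
      using that r by (simp add: f_def max_def field_simps)
    then have "dist a z < r" if "f z \<noteq> 0" for z
      using that by force
    then show "{z. f z \<noteq> 0} \<subseteq> cball a 1"
      using r by fastforce
    show "f a = 1" by (simp add: f_def)
    show "f x = 0" if "x \<in> E" "x \<noteq> a" for x
      using \<delta>(2)[OF that] r by (simp add: f_def r_def field_simps)
  qed
qed

lemma admissible_seq_approx_lf_sum:
  fixes f :: "complex \<Rightarrow> real" and \<epsilon> :: real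
  assumes "admissible_seq \<phi>" "continuous_on UNIV f" "{z. f z \<noteq> 0} \<subseteq> cball 0 (real m)" "\<epsilon> > 0"
  obtains j where "\<And>A. locally_finite A \<Longrightarrow>
    \<bar>lf_sum f A - lf_sum (\<phi> j) A\<bar> \<le> card (A \<inter> cball 0 (real m)) * \<epsilon>"
proof -
  obtain j where j: "{z. \<phi> j z \<noteq> 0} \<subseteq> cball 0 (real m)" "\<And>z. \<bar>f z - \<phi> j z\<bar> < \<epsilon>"
    using assms(1)[unfolded admissible_seq_def, THEN conjunct2, rule_format, where m = m and f = f]
      assms(2-4) by blast
  show thesis
  proof (rule that)
    fix A :: "complex set" assume "locally_finite A"
    show "\<bar>lf_sum f A - lf_sum (\<phi> j) A\<bar> \<le> card (A \<inter> cball 0 (real m)) * \<epsilon>"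
      by (rule lf_sum_approx[OF \<open>locally_finite A\<close> compact_cball assms(3) j(1) less_imp_le[OF j(2)]])
  qed
qed

lemma lf_sum_separates:
  assumes adm: "admissible_seq \<phi>" and A: "locally_finite A" and B: "locally_finite B"
    and a: "a \<in> A" "a \<notin> B"
  obtains j where "lf_sum (\<phi> j) A \<noteq> lf_sum (\<phi> j) B"
proof -
  obtain f :: "complex \<Rightarrow> real" where f: "continuous_on UNIV f" "{z. f z \<noteq> 0} \<subseteq> cball a 1"
    "f a = 1" "\<And>x. x \<in> A \<union> B \<Longrightarrow> x \<noteq> a \<Longrightarrow> f x = 0"
    using exists_bump_isolating[OF locally_finite_Un[OF A B]] by blast
  obtain m :: nat where m: "norm a + 1 \<le> real m" using real_arch_simple by blast
  define K where "K = cball (0::complex) (real m)"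
  have "cball a 1 \<subseteq> K"
  proof
    fix z assume "z \<in> cball a 1"
    then have "norm z \<le> norm a + 1" using dist_triangle[of 0 z a] by simp
    then show "z \<in> K" using m by (simp add: K_def)
  qed
  with f(2) have "{z. f z \<noteq> 0} \<subseteq> K" by (rule order.trans)
  define N where "N = real (card (A \<inter> K)) + real (card (B \<inter> K))"
  define \<epsilon> where "\<epsilon> = 1 / (2 * (N + 1))"
  have "N \<ge> 0" by (simp add: N_def)
  then have "\<epsilon> > 0" "N * \<epsilon> < 1" by (simp_all add: \<epsilon>_def field_simps)
  then obtain j where approx: "\<And>X. locally_finite X \<Longrightarrow> \<bar>lf_sum f X - lf_sum (\<phi> j) X\<bar> \<le> card (X \<inter> K) * \<epsilon>"
    using admissible_seq_approx_lf_sum[OF adm f(1), of m] \<open>{z. f z \<noteq> 0} \<subseteq> K\<close> unfolding K_def by blast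
  have "lf_sum f A = (\<Sum>x\<in>{a}. f x)"
    using a f(4) by (intro lf_sum_eq_sum) auto
  with approx[OF A] f(3) have eA: "\<bar>1 - lf_sum (\<phi> j) A\<bar> \<le> card (A \<inter> K) * \<epsilon>" by simp
  have "{x \<in> B. f x \<noteq> 0} = {}" using a f(4) by blast
  with approx[OF B] have eB: "\<bar>lf_sum (\<phi> j) B\<bar> \<le> card (B \<inter> K) * \<epsilon>" by (simp add: lf_sum_def)
  have "lf_sum (\<phi> j) A \<noteq> lf_sum (\<phi> j) B"
  proof
    assume "lf_sum (\<phi> j) A = lf_sum (\<phi> j) B"
    then have "1 \<le> \<bar>1 - lf_sum (\<phi> j) A\<bar> + \<bar>lf_sum (\<phi> j) B\<bar>"
      using abs_triangle_ineq[of "1 - lf_sum (\<phi> j) A" "lf_sum (\<phi> j) A"] by simp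
    then show False using eA eB \<open>N * \<epsilon> < 1\<close> unfolding N_def distrib_right by linarith
  qed
  then show thesis ..
qed

lemma Metric_space_dV:
  assumes "admissible_seq \<phi>"
  shows "Metric_space Clf_inf (dV \<phi>)"
proof
  fix A B C
  show "0 \<le> dV \<phi> A B" by (rule dV_nonneg)
  show "dV \<phi> A B = dV \<phi> B A" by (rule dV_commute)
  show "dV \<phi> A C \<le> dV \<phi> A B + dV \<phi> B C" by (rule dV_triangle)
  assume "A \<in> Clf_inf" "B \<in> Clf_inf"
  then have A: "locally_finite A" and B: "locally_finite B" by (simp_all add: Clf_inf_iff)
  have subset: "X \<subseteq> Y"
    if "locally_finite X" "locally_finite Y" "\<And>j. lf_sum (\<phi> j) X = lf_sum (\<phi> j) Y" for X Y
    using lf_sum_separates[OF assms that(1,2)] that(3) by blast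
  show "dV \<phi> A B = 0 \<longleftrightarrow> A = B"
    unfolding dV_eq_0_iff using subset[OF A B] subset[OF B A] by auto
qed

lemma dV_tendsto_0:
  assumes "\<And>j. ((\<lambda>s. lf_sum (\<phi> j) (\<gamma> s)) \<longlongrightarrow> lf_sum (\<phi> j) A) F"
  shows "((\<lambda>s. dV \<phi> A (\<gamma> s)) \<longlongrightarrow> 0) F"
proof (cases "F = bot")
  case False
  define a where "a j s = (1/2::real)^Suc j * (\<bar>lf_sum (\<phi> j) A - lf_sum (\<phi> j) (\<gamma> s)\<bar> /
      (1 + \<bar>lf_sum (\<phi> j) A - lf_sum (\<phi> j) (\<gamma> s)\<bar>))" for j s
  have "((\<lambda>s. a j s) \<longlongrightarrow> (1/2)^Suc j * (\<bar>lf_sum (\<phi> j) A - lf_sum (\<phi> j) A\<bar> /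
      (1 + \<bar>lf_sum (\<phi> j) A - lf_sum (\<phi> j) A\<bar>))) F" for j
    unfolding a_def by (intro tendsto_intros assms) auto
  then have lim: "((\<lambda>s. a j s) \<longlongrightarrow> 0) F" for j by simp
  have bound: "eventually (\<lambda>(j, s). norm (a j s) \<le> (1/2)^Suc j) (at_top \<times>\<^sub>F F)"
    unfolding a_def real_norm_def split_beta by (intro always_eventually allI dV_term_bound)
  have "((\<lambda>s. \<Sum>j. a j s) \<longlongrightarrow> (\<Sum>j. 0)) F"
    using tannerys_theorem[where b = "\<lambda>_. 0", OF lim bound summable_half_power_Suc False] by blast
  then show ?thesis by (simp add: dV_def a_def)
qed simp

lemma (in Metric_space) continuous_map_into_mtopology:
  assumes "g ` S \<subseteq> M"
    and "\<And>t. t \<in> S \<Longrightarrow> ((\<lambda>s. d (g t) (g s)) \<longlongrightarrow> 0) (at t within S)"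
  shows "continuous_map (top_of_set S) mtopology g"
  unfolding continuous_map_to_metric
proof (intro ballI allI impI)
  fix t and \<epsilon> :: real assume t: "t \<in> topspace (top_of_set S)" and "\<epsilon> > 0"
  then have "eventually (\<lambda>s. d (g t) (g s) < \<epsilon>) (at t within S)"
    using assms(2)[of t] by (auto simp: tendsto_iff)
  then obtain T where T: "open T" "t \<in> T" "\<And>s. s \<in> T \<Longrightarrow> s \<in> S \<Longrightarrow> s \<noteq> t \<Longrightarrow> d (g t) (g s) < \<epsilon>"
    unfolding eventually_at_topological by blast
  have "g s \<in> mball (g t) \<epsilon>" if "s \<in> S \<inter> T" for s
    using T(3)[of s] that t assms(1) \<open>\<epsilon> > 0\<close> by (cases "s = t") auto
  then show "\<exists>U. openin (top_of_set S) U \<and> t \<in> U \<and> (\<forall>s\<in>U. g s \<in> mball (g t) \<epsilon>)"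
    using T t by (intro exI[of _ "S \<inter> T"]) (auto simp: openin_open_Int)
qed

definition dilate :: "'a::real_normed_vector \<Rightarrow> real \<Rightarrow> 'a \<Rightarrow> 'a" where
  "dilate p c z = p + c *\<^sub>R (z - p)"

lemma dilate_1 [simp]: "dilate p 1 z = z"
  by (simp add: dilate_def)

lemma inj_dilate: "c \<noteq> 0 \<Longrightarrow> inj (dilate p c)"
  by (rule injI) (simp add: dilate_def)

lemma dist_centre_dilate: "dist p (dilate p c z) = \<bar>c\<bar> * dist p z"
  by (simp add: dilate_def dist_norm norm_minus_commute)

lemma continuous_on_dilate_factor: "continuous_on S (\<lambda>c. dilate p c z)"
  unfolding dilate_def by (intro continuous_intros)

lemma locally_finite_dilate:
  fixes A :: "'a::{real_normed_vector, heine_borel} set"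
  assumes "locally_finite A" "c \<noteq> 0"
  shows "locally_finite (dilate p c ` A)"
proof (rule locally_finite_cballI)
  fix r
  have "dilate p c ` A \<inter> cball p r \<subseteq> dilate p c ` (A \<inter> cball p (r / \<bar>c\<bar>))"
  proof
    fix z assume "z \<in> dilate p c ` A \<inter> cball p r"
    then obtain a where a: "a \<in> A" "z = dilate p c a" "\<bar>c\<bar> * dist p a \<le> r"
      by (auto simp: dist_centre_dilate)
    then have "dist p a \<le> r / \<bar>c\<bar>"
      using assms(2) by (simp add: le_divide_eq mult.commute)
    with a show "z \<in> dilate p c ` (A \<inter> cball p (r / \<bar>c\<bar>))" by auto
  qed
  then show "finite (dilate p c ` A \<inter> cball p r)"
    using locally_finite_cball[OF assms(1)] finite_subset by blast
qed

lemma dilate_in_Clf_inf: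
  assumes "A \<in> Clf_inf" "c \<noteq> 0"
  shows "dilate p c ` A \<in> Clf_inf"
proof -
  have "inj_on (dilate p c) A"
    using inj_dilate[OF assms(2)] by (rule inj_on_subset) simp
  then show ?thesis
    using assms locally_finite_dilate[of A c p] by (simp add: Clf_inf_iff finite_image_iff)
qed

lemma Clf_inf_Un:
  assumes "A \<in> Clf_inf" "countable B" "locally_finite B"
  shows "A \<union> B \<in> Clf_inf"
  using assms by (simp add: Clf_inf_iff locally_finite_Un)

lemma compact_support_bounded_dist:
  assumes "compact (closure {z. f z \<noteq> 0})"
  obtains R where "\<And>z. f z \<noteq> 0 \<Longrightarrow> dist p z \<le> R"
proof -
  have "bounded {z. f z \<noteq> 0}"
    using bounded_subset[OF compact_imp_bounded[OF assms] closure_subset] .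
  then obtain R where "\<forall>z\<in>{z. f z \<noteq> 0}. dist p z \<le> R"
    using bounded_any_center by blast
  then show thesis by (intro that[of R]) simp
qed

lemma continuous_on_lf_sum_dilate:
  assumes A: "locally_finite A" and f: "continuous_on UNIV f" "compact (closure {z. f z \<noteq> 0})"
  shows "continuous_on {1..} (\<lambda>c. lf_sum f (dilate p c ` A))"
proof -
  obtain R where R: "\<And>z. f z \<noteq> 0 \<Longrightarrow> dist p z \<le> R"
    using compact_support_bounded_dist[OF f(2)] by blast
  define F where "F = A \<inter> cball p R"
  have "finite F" unfolding F_def by (rule locally_finite_cball[OF A])
  have eq: "lf_sum f (dilate p c ` A) = (\<Sum>a\<in>F. f (dilate p c a))" if "c \<ge> 1" for c
  proof -
    have "dist p a \<le> R" if "a \<in> A" "f (dilate p c a) \<noteq> 0" for a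
    proof -
      have "dist p a \<le> \<bar>c\<bar> * dist p a" using \<open>c \<ge> 1\<close> by (simp add: mult_le_cancel_right1)
      also have "\<dots> \<le> R" using R[OF that(2)] by (simp add: dist_centre_dilate)
      finally show ?thesis .
    qed
    then have "lf_sum f (dilate p c ` A) = (\<Sum>z\<in>dilate p c ` F. f z)"
      using \<open>finite F\<close> by (intro lf_sum_eq_sum) (auto simp: F_def)
    also have "\<dots> = (\<Sum>a\<in>F. f (dilate p c a))"
      using inj_dilate[of c p] \<open>c \<ge> 1\<close> by (simp add: sum.reindex inj_on_subset)
    finally show ?thesis .
  qed
  have "continuous_on {1..} (\<lambda>c. \<Sum>a\<in>F. f (dilate p c a))"
    by (intro continuous_on_sum continuous_on_compose2[OF f(1) continuous_on_dilate_factor]) auto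
  then show ?thesis
    by (rule continuous_on_eq) (simp add: eq)
qed

lemma lf_sum_dilate_eventually_0:
  assumes A: "locally_finite A" and "p \<notin> A" and f: "compact (closure {z. f z \<noteq> 0})"
  obtains C where "C \<ge> 1" "\<And>c. c \<ge> C \<Longrightarrow> lf_sum f (dilate p c ` A) = 0"
proof -
  obtain R where R: "\<And>z. f z \<noteq> 0 \<Longrightarrow> dist p z \<le> R"
    using compact_support_bounded_dist[OF f] by blast
  obtain \<delta> where \<delta>: "\<delta> > 0" "\<forall>a\<in>A. a \<noteq> p \<longrightarrow> \<delta> \<le> dist p a"
    using locally_finite_set_avoid[OF A, of p] by blast
  define C where "C = max 1 ((\<bar>R\<bar> + 1) / \<delta>)"
  have "(\<bar>R\<bar> + 1) / \<delta> \<le> C" unfolding C_def by (rule max.cobounded2)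
  then have RC: "\<bar>R\<bar> + 1 \<le> C * \<delta>" using \<delta>(1) by (simp add: divide_le_eq)
  show thesis
  proof
    show "C \<ge> 1" by (simp add: C_def)
    fix c assume "c \<ge> C"
    have "f (dilate p c a) = 0" if "a \<in> A" for a
    proof (rule ccontr)
      have "a \<noteq> p" using that \<open>p \<notin> A\<close> by auto
      then have "\<delta> \<le> dist p a" using \<delta>(2) that by simp
      then have "C * \<delta> \<le> c * dist p a"
        using \<open>c \<ge> C\<close> \<open>C \<ge> 1\<close> \<delta>(1) by (intro mult_mono) auto
      also have "\<dots> = dist p (dilate p c a)"
        using \<open>c \<ge> C\<close> \<open>C \<ge> 1\<close> by (simp add: dist_centre_dilate)
      finally have "\<bar>R\<bar> + 1 \<le> dist p (dilate p c a)" using RC by linarith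
      moreover assume "f (dilate p c a) \<noteq> 0"
      ultimately show False using R by fastforce
    qed
    then have "{z \<in> dilate p c ` A. f z \<noteq> 0} = {}" by blast
    then show "lf_sum f (dilate p c ` A) = 0" by (simp add: lf_sum_def)
  qed
qed

lemma continuous_on_escape_right:
  fixes G :: "real \<Rightarrow> real"
  assumes G: "continuous_on {1..} G" and "C \<ge> 1" and vanish: "\<And>c. c \<ge> C \<Longrightarrow> G c = 0"
  shows "continuous_on {0..1} (\<lambda>t. if t < 1 then G (1 / (1 - t)) else 0)"
proof -
  define t0 where "t0 = 1 - 1 / C"
  have t0: "0 \<le> t0" "t0 < 1" using \<open>C \<ge> 1\<close> by (auto simp: t0_def)
  have "continuous_on {0..1} (\<lambda>t. if t \<le> t0 then G (1 / (1 - t)) else 0)"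
  proof (rule continuous_on_cases_le[OF _ continuous_on_const continuous_on_id])
    have "(\<lambda>t. 1 / (1 - t)) ` {t \<in> {0..1}. t \<le> t0} \<subseteq> {1..}"
      using t0 by (auto simp: field_simps)
    then show "continuous_on {t \<in> {0..1}. t \<le> t0} (\<lambda>t. G (1 / (1 - t)))"
      using t0 by (intro continuous_on_compose2[OF G]) (auto intro!: continuous_intros)
    show "G (1 / (1 - t)) = 0" if "t = t0" for t
      using that vanish \<open>C \<ge> 1\<close> by (simp add: t0_def)
  qed
  moreover have "(if t \<le> t0 then G (1 / (1 - t)) else 0) = (if t < 1 then G (1 / (1 - t)) else 0)"
    if "t \<le> 1" for t
  proof (cases "t0 < t \<and> t < 1")
    case True
    then have "C \<le> 1 / (1 - t)" using \<open>C \<ge> 1\<close> by (simp add: t0_def field_simps)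
    then show ?thesis using vanish True by simp
  qed (use t0 that in auto)
  ultimately show ?thesis
    by (rule continuous_on_eq) simp
qed

lemma continuous_on_escape_left:
  fixes G :: "real \<Rightarrow> real"
  assumes "continuous_on {1..} G" and "C \<ge> 1" and "\<And>c. c \<ge> C \<Longrightarrow> G c = 0"
  shows "continuous_on {0..1} (\<lambda>t. if 0 < t then G (1 / t) else 0)"
proof -
  have "continuous_on {0..1} ((\<lambda>t. if t < 1 then G (1 / (1 - t)) else 0) \<circ> (\<lambda>t. 1 - t))"
    by (intro continuous_on_compose continuous_on_diff continuous_on_const continuous_on_id
        continuous_on_subset[OF continuous_on_escape_right[OF assms]]) auto
  moreover have "(\<lambda>t. if t < 1 then G (1 / (1 - t)) else 0) \<circ> (\<lambda>t. 1 - t) =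
      (\<lambda>t. if 0 < t then G (1 / t) else 0)"
    by (auto simp: fun_eq_iff)
  ultimately show ?thesis by simp
qed

definition ray_points :: "'a::real_normed_vector \<Rightarrow> 'a \<Rightarrow> 'a set" where
  "ray_points p u = range (\<lambda>n. p + real (Suc n) *\<^sub>R u)"

lemma ray_points_in_Clf_inf:
  assumes "u \<noteq> 0"
  shows "ray_points p u \<in> Clf_inf"
proof -
  let ?g = "\<lambda>n. p + real (Suc n) *\<^sub>R u"
  have "inj ?g" using assms by (rule_tac injI) simp
  moreover have "locally_finite (range ?g)"
  proof (rule locally_finite_cballI)
    fix r
    have "range ?g \<inter> cball p r \<subseteq> ?g ` {..nat \<lceil>r / norm u\<rceil>}"
    proof
      fix z assume "z \<in> range ?g \<inter> cball p r"
      then obtain n where n: "z = ?g n" "dist p (?g n) \<le> r" by auto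
      moreover have "dist p (?g n) = real (Suc n) * norm u" by (simp add: dist_norm)
      ultimately have "real (Suc n) \<le> r / norm u"
        using assms by (simp add: le_divide_eq)
      then have "n \<le> nat \<lceil>r / norm u\<rceil>" by linarith
      with n(1) show "z \<in> ?g ` {..nat \<lceil>r / norm u\<rceil>}" by blast
    qed
    then show "finite (range ?g \<inter> cball p r)"
      using finite_subset by blast
  qed
  ultimately show ?thesis
    by (simp add: ray_points_def Clf_inf_iff range_inj_infinite)
qed

lemma centre_notin_ray_points: "u \<noteq> 0 \<Longrightarrow> p \<notin> ray_points p u"
  by (auto simp: ray_points_def)

lemma sgn_ray_points: "b \<in> ray_points p u \<Longrightarrow> sgn (b - p) = sgn u"
  by (auto simp: ray_points_def sgn_scaleR)

lemma sgn_eq_if_dilate_eq: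
  assumes "dilate p s a = dilate p c b" "s > 0" "c > 0"
  shows "sgn (a - p) = sgn (b - p)"
proof -
  have "sgn (s *\<^sub>R (a - p)) = sgn (c *\<^sub>R (b - p))"
    using assms(1) by (simp add: dilate_def)
  then show ?thesis using assms(2,3) by (simp add: sgn_scaleR)
qed

lemma exists_unit_complex_notin_countable:
  assumes "countable (D :: complex set)"
  obtains u where "norm u = 1" "u \<notin> D"
proof -
  have "uncountable (sphere (0::complex) 1)"
    by (rule connected_uncountable[where a = 1 and b = "-1"]) (auto intro: connected_sphere)
  then have "uncountable (sphere (0::complex) 1 - D)"
    using assms by (rule uncountable_minus_countable)
  then obtain u where "u \<in> sphere 0 1 - D"
    by (metis all_not_in_conv countable_empty)
  then show thesis by (intro that) auto
qed

definition dilation_path :: "'a::real_normed_vector \<Rightarrow> 'a set \<Rightarrow> 'a set \<Rightarrow> real \<Rightarrow> 'a set" where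
  "dilation_path p A B t =
     (if t < 1 then dilate p (1 / (1 - t)) ` A else {}) \<union> (if 0 < t then dilate p (1 / t) ` B else {})"

lemma dilation_path_0 [simp]: "dilation_path p A B 0 = A"
  and dilation_path_1 [simp]: "dilation_path p A B 1 = B"
  by (simp_all add: dilation_path_def)

lemma dilation_path_in_Clf_inf:
  assumes "A \<in> Clf_inf" "B \<in> Clf_inf" "t \<le> 1"
  shows "dilation_path p A B t \<in> Clf_inf"
proof (cases "t < 1")
  case True
  have "countable (if 0 < t then dilate p (1 / t) ` B else {})"
    "locally_finite (if 0 < t then dilate p (1 / t) ` B else {})"
    using assms(2) by (simp_all add: Clf_inf_iff locally_finite_dilate)
  then show ?thesis
    using True assms(1) unfolding dilation_path_def by (simp add: dilate_in_Clf_inf Clf_inf_Un)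
next
  case False
  then show ?thesis using assms by simp
qed

lemma lf_sum_dilation_path:
  assumes "locally_finite A" "locally_finite B" "compact (closure {z. f z \<noteq> 0})"
    and directions: "\<And>a b. a \<in> A \<Longrightarrow> b \<in> B \<Longrightarrow> sgn (a - p) \<noteq> sgn (b - p)"
  shows "lf_sum f (dilation_path p A B t) =
    (if t < 1 then lf_sum f (dilate p (1 / (1 - t)) ` A) else 0) +
    (if 0 < t then lf_sum f (dilate p (1 / t) ` B) else 0)"
proof -
  define X where "X = (if t < 1 then dilate p (1 / (1 - t)) ` A else {})"
  define Y where "Y = (if 0 < t then dilate p (1 / t) ` B else {})"
  have "locally_finite X" "locally_finite Y"
    using assms(1,2) by (simp_all add: X_def Y_def locally_finite_dilate)
  moreover have "X \<inter> Y = {}"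
  proof (cases "0 < t \<and> t < 1")
    case True
    then show ?thesis
      using sgn_eq_if_dilate_eq[of p "1 / (1 - t)" _ "1 / t"] directions by (auto simp: X_def Y_def)
  qed (auto simp: X_def Y_def)
  ultimately have "lf_sum f (X \<union> Y) = lf_sum f X + lf_sum f Y"
    by (rule lf_sum_Un_disjoint[OF _ _ assms(3)])
  then show ?thesis
    by (simp add: dilation_path_def X_def Y_def lf_sum_def)
qed

lemma continuous_on_lf_sum_dilation_path:
  assumes A: "locally_finite A" "p \<notin> A" and B: "locally_finite B" "p \<notin> B"
    and directions: "\<And>a b. a \<in> A \<Longrightarrow> b \<in> B \<Longrightarrow> sgn (a - p) \<noteq> sgn (b - p)"
    and f: "continuous_on UNIV f" "compact (closure {z. f z \<noteq> 0})"
  shows "continuous_on {0..1} (\<lambda>t. lf_sum f (dilation_path p A B t))"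
proof -
  obtain CA where CA: "CA \<ge> 1" "\<And>c. c \<ge> CA \<Longrightarrow> lf_sum f (dilate p c ` A) = 0"
    using lf_sum_dilate_eventually_0[OF A f(2)] by blast
  have escape_A: "continuous_on {0..1} (\<lambda>t. if t < 1 then lf_sum f (dilate p (1 / (1 - t)) ` A) else 0)"
    using continuous_on_lf_sum_dilate[OF A(1) f] CA by (rule continuous_on_escape_right)
  obtain CB where CB: "CB \<ge> 1" "\<And>c. c \<ge> CB \<Longrightarrow> lf_sum f (dilate p c ` B) = 0"
    using lf_sum_dilate_eventually_0[OF B f(2)] by blast
  have escape_B: "continuous_on {0..1} (\<lambda>t. if 0 < t then lf_sum f (dilate p (1 / t) ` B) else 0)"
    using continuous_on_lf_sum_dilate[OF B(1) f] CB by (rule continuous_on_escape_left)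
  have "lf_sum f (dilation_path p A B t) =
    (if t < 1 then lf_sum f (dilate p (1 / (1 - t)) ` A) else 0) +
    (if 0 < t then lf_sum f (dilate p (1 / t) ` B) else 0)" for t
    by (rule lf_sum_dilation_path[OF A(1) B(1) f(2) directions])
  then show ?thesis
    using continuous_on_add[OF escape_A escape_B] by simp
qed

lemma path_component_of_dV_if_directions_differ:
  assumes adm: "admissible_seq \<phi>" and A: "A \<in> Clf_inf" "p \<notin> A" and B: "B \<in> Clf_inf" "p \<notin> B"
    and directions: "\<And>a b. a \<in> A \<Longrightarrow> b \<in> B \<Longrightarrow> sgn (a - p) \<noteq> sgn (b - p)"
  shows "path_component_of (Metric_space.mtopology Clf_inf (dV \<phi>)) A B"
proof -
  have "locally_finite A" "locally_finite B"
    using A(1) B(1) by (simp_all add: Clf_inf_iff)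
  then have "continuous_on {0..1} (\<lambda>t. lf_sum (\<phi> j) (dilation_path p A B t))" for j
    using adm A(2) B(2) directions
    by (intro continuous_on_lf_sum_dilation_path) (auto simp: admissible_seq_def)
  moreover have "dilation_path p A B ` {0..1} \<subseteq> Clf_inf"
    using A(1) B(1) by (auto intro: dilation_path_in_Clf_inf)
  ultimately have "pathin (Metric_space.mtopology Clf_inf (dV \<phi>)) (dilation_path p A B)"
    unfolding pathin_def
    by (intro Metric_space.continuous_map_into_mtopology[OF Metric_space_dV[OF adm]] dV_tendsto_0)
      (auto simp: continuous_on_def)
  then show ?thesis
    unfolding path_component_of_def by (metis dilation_path_0 dilation_path_1)
qed

theorem mainTheorem7:
  fixes \<phi> :: "nat \<Rightarrow> complex \<Rightarrow> real"
  assumes "admissible_seq \<phi>"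
  shows "path_connected_space (Metric_space.mtopology Clf_inf (dV \<phi>))"
  unfolding path_connected_space_iff_path_component
    Metric_space.topspace_mtopology[OF Metric_space_dV[OF assms]]
proof (intro ballI)
  fix A B assume A: "A \<in> Clf_inf" and B: "B \<in> Clf_inf"
  then have "countable (A \<union> B)" by (simp add: Clf_inf_iff)
  then obtain p where p: "p \<notin> A \<union> B"
    using ball_minus_countable_nonempty[of "A \<union> B" 1 0] by auto
  obtain u where u: "norm u = 1" "u \<notin> sgn ` (\<lambda>a. a - p) ` (A \<union> B)"
    using exists_unit_complex_notin_countable \<open>countable (A \<union> B)\<close> by (metis countable_image)
  define R where "R = ray_points p u"
  have "u \<noteq> 0" "sgn u = u" using u(1) by (auto simp: sgn_div_norm)
  then have R: "R \<in> Clf_inf" "p \<notin> R" "\<And>b. b \<in> R \<Longrightarrow> sgn (b - p) = u"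
    by (simp_all add: R_def ray_points_in_Clf_inf centre_notin_ray_points sgn_ray_points)
  have "path_component_of (Metric_space.mtopology Clf_inf (dV \<phi>)) X R" if "X \<in> {A, B}" for X
    using that A B p u(2) R by (intro path_component_of_dV_if_directions_differ[OF assms]) auto
  then show "path_component_of (Metric_space.mtopology Clf_inf (dV \<phi>)) A B"
    by (meson insertCI path_component_of_sym path_component_of_trans)
qed

end
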